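(* Let $(\mathcal G,p)$ be a CPS on the finite set $\Omega$ with $\mathcal G$ closed under unions and nonempty intersections and covering $\Omega$, and let $\widehat{\mathcal G}$ be its $1$-augmentation. Then: (i) there exists a CPS $(\widehat{\mathcal G},\widehat p)$ extending $(\mathcal G,p)$, i.e. $\widehat p_G=p_G$ for every $G\in\mathcal G$, which moreover satisfies (ii): whenever $K\in\widehat{\mathcal G}$, $L\subseteq K$ and $\widehat p_K(L)=1$, then $L\in\widehat{\mathcal G}$; (iii) for this extension, the $1$-augmentation of $(\widehat{\mathcal G},\widehat p)$ equals $\widehat{\mathcal G}$; (iv) $(\mathcal G,p)$ is $1$-closed if and only if $\widehat{\mathcal G}=\mathcal G$.
   Context: $\Omega$ is a finite set; every subset is an event. A CPS is a pair $(\mathcal G,p)$ where $\mathcal G$ is a family of nonempty subsets of $\Omega$ and $p$ assigns to each $G\in\mathcal G$ a probability measure $p_G$ on $\Omega$ with $p_G(G)=1$ and $p_G(E)=p_G(F)p_F(E)$ whenever $E\subseteq F\subseteq G$, $F,G\in\mathcal G$. For a CPS $(\mathcal G,p)$ let $\mathcal E=\{E\subseteq\Omega: p_G(E)=1 \text{ for some } G\in\mathcal G \text{ with } E\subseteq G\}$. The $1$-augmentation $\widehat{\mathcal G}$ of $(\mathcal G,p)$ is the smallest family of subsets of $\Omega$ that contains $\mathcal E$, is closed under unions and under nonempty intersections, and covers $\Omega$. $(\mathcal G,p)$ is $1$-closed if $\mathcal E=\mathcal G$. *)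

theory Defs
  imports "HOL-Probability.Probability"
begin

text \<open>A conditional probability system on the finite set Omega. Each p G is a
probability measure on Omega (given as a pmf); the values of p outside the family
are irrelevant.\<close>
definition CPS :: "'a set \<Rightarrow> 'a set set \<Rightarrow> ('a set \<Rightarrow> 'a pmf) \<Rightarrow> bool" where
  "CPS \<Omega> \<G> p \<longleftrightarrow>
     (\<forall>G\<in>\<G>. G \<noteq> {} \<and> G \<subseteq> \<Omega>) \<and>
     (\<forall>G\<in>\<G>. set_pmf (p G) \<subseteq> \<Omega>) \<and>
     (\<forall>G\<in>\<G>. measure_pmf.prob (p G) G = 1) \<and>
     (\<forall>E F G. E \<subseteq> F \<longrightarrow> F \<subseteq> G \<longrightarrow> F \<in> \<G> \<longrightarrow> G \<in> \<G> \<longrightarrow>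
        measure_pmf.prob (p G) E = measure_pmf.prob (p G) F * measure_pmf.prob (p F) E)"

definition one_events :: "'a set \<Rightarrow> 'a set set \<Rightarrow> ('a set \<Rightarrow> 'a pmf) \<Rightarrow> 'a set set" where
  "one_events \<Omega> \<G> p = {E. E \<subseteq> \<Omega> \<and> (\<exists>G\<in>\<G>. E \<subseteq> G \<and> measure_pmf.prob (p G) E = 1)}"

definition union_closed :: "'a set set \<Rightarrow> bool" where
  "union_closed \<H> \<longleftrightarrow> (\<forall>A\<in>\<H>. \<forall>B\<in>\<H>. A \<union> B \<in> \<H>)"

definition ne_inter_closed :: "'a set set \<Rightarrow> bool" where
  "ne_inter_closed \<H> \<longleftrightarrow> (\<forall>A\<in>\<H>. \<forall>B\<in>\<H>. A \<inter> B \<noteq> {} \<longrightarrow> A \<inter> B \<in> \<H>)"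

definition one_aug :: "'a set \<Rightarrow> 'a set set \<Rightarrow> ('a set \<Rightarrow> 'a pmf) \<Rightarrow> 'a set set" where
  "one_aug \<Omega> \<G> p = \<Inter>{\<H>. one_events \<Omega> \<G> p \<subseteq> \<H> \<and> union_closed \<H> \<and>
                               ne_inter_closed \<H> \<and> \<Union>\<H> = \<Omega>}"

definition one_closed :: "'a set \<Rightarrow> 'a set set \<Rightarrow> ('a set \<Rightarrow> 'a pmf) \<Rightarrow> bool" where
  "one_closed \<Omega> \<G> p \<longleftrightarrow> one_events \<Omega> \<G> p = \<G>"

end

theory Submission
  imports Defs
begin

text \<open>For a nonempty event \<open>K \<subseteq> \<Omega>\<close>, the members \<open>G\<close> of \<open>\<G>\<close> with \<open>p\<^sub>G(K) > 0\<close> are closed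
under unions, so there is a largest one, \<open>G\<^sub>K\<close>; extend \<open>p\<close> by conditioning \<open>p\<^sub>G\<^sub>K\<close> on \<open>K\<close>
(uniform on \<open>K\<close> if no such \<open>G\<close> exists). This is a CPS on all nonempty events.
The 1-augmentation consists exactly of the nonempty \<open>L \<subseteq> \<Omega>\<close> that contain, with every \<open>x\<close>, the
atom of \<open>x\<close>, i.e. the intersection of all probability-one events containing \<open>x\<close>. A point
\<open>y \<noteq> x\<close> of that atom lies in the support of every \<open>p\<^sub>G\<close> with \<open>x \<in> G\<close>, in particular of
\<open>p\<^sub>G\<^sub>K\<close> when \<open>x \<in> K\<close>; so an \<open>L \<subseteq> K\<close> of extended probability one contains the atoms of its
points. Hence the probability-one events of the extension are exactly the 1-augmentation, which is
therefore its own 1-augmentation.\<close>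

lemma measure_pmf_eq_1_iff: "measure_pmf.prob M A = 1 \<longleftrightarrow> set_pmf M \<subseteq> A"
  by (subst measure_pmf.prob_eq_1) (auto simp: AE_measure_pmf_iff)

lemma measure_pmf_Int_superset_support:
  assumes "set_pmf M \<subseteq> G"
  shows "measure_pmf.prob M (A \<inter> G) = measure_pmf.prob M A"
  by (metis assms Int_assoc inf.absorb_iff2 measure_Int_set_pmf)

lemma measure_cond_pmf:
  assumes "set_pmf M \<inter> S \<noteq> {}"
  shows "measure_pmf.prob (cond_pmf M S) A = measure_pmf.prob M (A \<inter> S) / measure_pmf.prob M S"
  using assms
  by (simp add: cond_pmf.rep_eq measure_uniform_measure emeasure_measure_pmf_not_zero Int_commute)

lemma cond_pmf_eq_if_chain:
  assumes pos: "measure_pmf.prob P G > 0" and supp: "set_pmf Q \<subseteq> G"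
    and chain: "\<And>E. E \<subseteq> G \<Longrightarrow> measure_pmf.prob P E = measure_pmf.prob P G * measure_pmf.prob Q E"
  shows "cond_pmf P G = Q"
proof (rule pmf_eqI)
  fix x
  have meet: "set_pmf P \<inter> G \<noteq> {}"
    using pos measure_pmf_zero_iff[of P G] by auto
  have "pmf (cond_pmf P G) x = measure_pmf.prob P ({x} \<inter> G) / measure_pmf.prob P G"
    by (simp add: measure_pmf_single[symmetric] measure_cond_pmf[OF meet])
  also have "\<dots> = measure_pmf.prob Q ({x} \<inter> G)"
    using chain[of "{x} \<inter> G"] pos by simp
  also have "\<dots> = pmf Q x"
    by (simp add: measure_pmf_Int_superset_support[OF supp] measure_pmf_single)
  finally show "pmf (cond_pmf P G) x = pmf Q x" .
qed

lemma union_closed_Union: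
  assumes "union_closed \<H>" "finite \<A>" "\<A> \<noteq> {}" "\<A> \<subseteq> \<H>"
  shows "\<Union>\<A> \<in> \<H>"
  using assms(2-4)
  by (induction \<A> rule: finite_ne_induct) (use assms(1) in \<open>auto simp: union_closed_def\<close>)

lemma ne_inter_closed_Inter:
  assumes "ne_inter_closed \<H>" "finite \<A>" "\<A> \<noteq> {}" "\<A> \<subseteq> \<H>" "\<Inter>\<A> \<noteq> {}"
  shows "\<Inter>\<A> \<in> \<H>"
  using assms(2-5)
  by (induction \<A> rule: finite_ne_induct) (use assms(1) in \<open>auto simp: ne_inter_closed_def\<close>)

lemma CPSI:
  assumes "\<And>G. G \<in> \<H> \<Longrightarrow> G \<noteq> {}" "\<And>G. G \<in> \<H> \<Longrightarrow> G \<subseteq> \<Omega>"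
    "\<And>G. G \<in> \<H> \<Longrightarrow> set_pmf (p G) \<subseteq> \<Omega>" "\<And>G. G \<in> \<H> \<Longrightarrow> measure_pmf.prob (p G) G = 1"
    "\<And>E F G. E \<subseteq> F \<Longrightarrow> F \<subseteq> G \<Longrightarrow> F \<in> \<H> \<Longrightarrow> G \<in> \<H> \<Longrightarrow>
       measure_pmf.prob (p G) E = measure_pmf.prob (p G) F * measure_pmf.prob (p F) E"
  shows "CPS \<Omega> \<H> p"
  unfolding CPS_def by (intro conjI ballI allI impI; rule assms; assumption)

lemma CPSD:
  assumes "CPS \<Omega> \<H> p" "G \<in> \<H>"
  shows "G \<noteq> {}" "G \<subseteq> \<Omega>" "set_pmf (p G) \<subseteq> \<Omega>" "measure_pmf.prob (p G) G = 1"
  using assms unfolding CPS_def by simp_all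

text \<open>The chain rule is kept away from the simplifier: as a rewrite rule it loops.\<close>

lemma CPS_chain:
  assumes "CPS \<Omega> \<H> p" "E \<subseteq> F" "F \<subseteq> G" "F \<in> \<H>" "G \<in> \<H>"
  shows "measure_pmf.prob (p G) E = measure_pmf.prob (p G) F * measure_pmf.prob (p F) E"
  using assms(1)[unfolded CPS_def] assms(2-5) by (elim conjE allE impE)

lemma CPS_mono: "CPS \<Omega> \<H> p \<Longrightarrow> \<H>' \<subseteq> \<H> \<Longrightarrow> CPS \<Omega> \<H>' p"
  by (rule CPSI) (auto dest: CPSD CPS_chain)

lemma one_eventsI:
  "E \<subseteq> \<Omega> \<Longrightarrow> G \<in> \<G> \<Longrightarrow> E \<subseteq> G \<Longrightarrow> measure_pmf.prob (p G) E = 1 \<Longrightarrow> E \<in> one_events \<Omega> \<G> p"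
  unfolding one_events_def by blast

lemma one_eventsE:
  assumes "E \<in> one_events \<Omega> \<G> p"
  obtains G where "G \<in> \<G>" "E \<subseteq> G" "measure_pmf.prob (p G) E = 1"
  using assms unfolding one_events_def by blast

lemma one_events_subset_Pow: "one_events \<Omega> \<G> p \<subseteq> Pow \<Omega> - {{}}"
  unfolding one_events_def by auto

lemma CPS_subset_one_events:
  assumes "CPS \<Omega> \<G> p"
  shows "\<G> \<subseteq> one_events \<Omega> \<G> p"
proof
  fix G assume "G \<in> \<G>"
  then show "G \<in> one_events \<Omega> \<G> p"
    using CPSD[OF assms] by (intro one_eventsI) auto
qed

lemma one_events_subset_one_aug: "one_events \<Omega> \<G> p \<subseteq> one_aug \<Omega> \<G> p"
  unfolding one_aug_def by auto

lemma one_aug_least: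
  "one_events \<Omega> \<G> p \<subseteq> \<H> \<Longrightarrow> union_closed \<H> \<Longrightarrow> ne_inter_closed \<H> \<Longrightarrow> \<Union>\<H> = \<Omega>
   \<Longrightarrow> one_aug \<Omega> \<G> p \<subseteq> \<H>"
  unfolding one_aug_def by (rule Inter_lower) auto

lemma one_aug_eq_if_one_events_eq:
  assumes "one_events \<Omega> \<G> p = \<H>" "union_closed \<H>" "ne_inter_closed \<H>" "\<Union>\<H> = \<Omega>"
  shows "one_aug \<Omega> \<G> p = \<H>"
  using one_aug_least[OF _ assms(2-4)] one_events_subset_one_aug assms(1) by blast

definition atom :: "'a set set \<Rightarrow> 'a \<Rightarrow> 'a set" where
  "atom \<E> x = \<Inter>{E\<in>\<E>. x \<in> E}"

definition atom_closed :: "'a set \<Rightarrow> 'a set set \<Rightarrow> 'a set set" where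
  "atom_closed \<Omega> \<E> = {L. L \<noteq> {} \<and> L \<subseteq> \<Omega> \<and> (\<forall>x\<in>L. atom \<E> x \<subseteq> L)}"

lemma union_closed_atom_closed: "union_closed (atom_closed \<Omega> \<E>)"
  unfolding union_closed_def atom_closed_def by blast

lemma ne_inter_closed_atom_closed: "ne_inter_closed (atom_closed \<Omega> \<E>)"
  unfolding ne_inter_closed_def atom_closed_def by blast

lemma subset_atom_closed: "\<E> \<subseteq> Pow \<Omega> - {{}} \<Longrightarrow> \<E> \<subseteq> atom_closed \<Omega> \<E>"
  unfolding atom_closed_def atom_def by blast

lemma Union_atom_closed:
  assumes "\<E> \<subseteq> Pow \<Omega> - {{}}" "\<Union>\<E> = \<Omega>"
  shows "\<Union>(atom_closed \<Omega> \<E>) = \<Omega>"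
proof (rule antisym)
  show "\<Union>(atom_closed \<Omega> \<E>) \<subseteq> \<Omega>"
    unfolding atom_closed_def by blast
  show "\<Omega> \<subseteq> \<Union>(atom_closed \<Omega> \<E>)"
    using Union_mono[OF subset_atom_closed[OF assms(1)]] assms(2) by simp
qed

lemma one_aug_eq_atom_closed:
  assumes fin: "finite \<Omega>" and cover: "\<Union>(one_events \<Omega> \<G> p) = \<Omega>"
  shows "one_aug \<Omega> \<G> p = atom_closed \<Omega> (one_events \<Omega> \<G> p)"
    (is "_ = atom_closed \<Omega> ?\<E>")
proof
  show "one_aug \<Omega> \<G> p \<subseteq> atom_closed \<Omega> ?\<E>"
    by (rule one_aug_least[OF subset_atom_closed[OF one_events_subset_Pow] union_closed_atom_closed
          ne_inter_closed_atom_closed Union_atom_closed[OF one_events_subset_Pow cover]])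
next
  show "atom_closed \<Omega> ?\<E> \<subseteq> one_aug \<Omega> \<G> p"
    unfolding one_aug_def
  proof (intro subsetI InterI)
    fix L \<H>
    assume L: "L \<in> atom_closed \<Omega> ?\<E>"
      and \<H>: "\<H> \<in> {\<H>. ?\<E> \<subseteq> \<H> \<and> union_closed \<H> \<and> ne_inter_closed \<H> \<and> \<Union>\<H> = \<Omega>}"
    have atom_in: "atom ?\<E> x \<in> \<H>" if "x \<in> L" for x
    proof -
      have "finite {E\<in>?\<E>. x \<in> E}"
        by (rule finite_subset[of _ "Pow \<Omega>"]) (use one_events_subset_Pow[of \<Omega> \<G> p] fin in auto)
      moreover have "{E\<in>?\<E>. x \<in> E} \<noteq> {}"
        using that L cover unfolding atom_closed_def by blast
      ultimately show ?thesis
        using ne_inter_closed_Inter[of \<H> "{E\<in>?\<E>. x \<in> E}"] \<H> unfolding atom_def by blast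
    qed
    have "L = \<Union>(atom ?\<E> ` L)"
      using L unfolding atom_closed_def atom_def by blast
    also have "\<dots> \<in> \<H>"
      using union_closed_Union[of \<H> "atom ?\<E> ` L"] atom_in \<H> L fin
      unfolding atom_closed_def by (auto intro: finite_subset)
    finally show "L \<in> \<H>" .
  qed
qed

locale lattice_cps =
  fixes \<Omega> :: "'a set" and \<G> :: "'a set set" and p :: "'a set \<Rightarrow> 'a pmf"
  assumes finite_space: "finite \<Omega>" and CPS: "CPS \<Omega> \<G> p"
    and union_closed: "union_closed \<G>" and ne_inter_closed: "ne_inter_closed \<G>"
    and covers: "\<Union>\<G> = \<Omega>"
begin

lemma family_subset: "G \<in> \<G> \<Longrightarrow> G \<subseteq> \<Omega>"
  using CPSD(2)[OF CPS] .

lemma prob_self: "G \<in> \<G> \<Longrightarrow> measure_pmf.prob (p G) G = 1"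
  using CPSD(4)[OF CPS] .

lemma set_pmf_subset: "G \<in> \<G> \<Longrightarrow> set_pmf (p G) \<subseteq> G"
  using prob_self measure_pmf_eq_1_iff by metis

lemma prob_chain:
  "E \<subseteq> F \<Longrightarrow> F \<subseteq> G \<Longrightarrow> F \<in> \<G> \<Longrightarrow> G \<in> \<G> \<Longrightarrow>
   measure_pmf.prob (p G) E = measure_pmf.prob (p G) F * measure_pmf.prob (p F) E"
  using CPS_chain[OF CPS] .

definition charging :: "'a set \<Rightarrow> 'a set set" where
  "charging K = {G\<in>\<G>. 0 < measure_pmf.prob (p G) K}"

definition max_charging :: "'a set \<Rightarrow> 'a set" where
  "max_charging K = \<Union>(charging K)"

definition ext_pmf :: "'a set \<Rightarrow> 'a pmf" where
  "ext_pmf K = (if charging K = {} then pmf_of_set K else cond_pmf (p (max_charging K)) K)"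

lemma charging_mono:
  assumes "F \<subseteq> K"
  shows "charging F \<subseteq> charging K"
proof
  fix G assume "G \<in> charging F"
  moreover have "measure_pmf.prob (p G) F \<le> measure_pmf.prob (p G) K"
    by (rule measure_pmf.finite_measure_mono[OF assms]) simp
  ultimately show "G \<in> charging K"
    by (simp add: charging_def)
qed

lemma charging_upward:
  assumes "G \<in> charging K" "G' \<in> \<G>" "G \<subseteq> G'" "0 < measure_pmf.prob (p G') G"
  shows "G' \<in> charging K"
proof -
  have G: "G \<in> \<G>" "0 < measure_pmf.prob (p G) K"
    using assms(1) unfolding charging_def by auto
  have "measure_pmf.prob (p G') (K \<inter> G) = measure_pmf.prob (p G') G * measure_pmf.prob (p G) K"
    using prob_chain[of "K \<inter> G" G G'] G assms(2,3)
    by (simp add: measure_pmf_Int_superset_support[OF set_pmf_subset])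
  then have "0 < measure_pmf.prob (p G') (K \<inter> G)"
    using G assms(4) by simp
  also have "\<dots> \<le> measure_pmf.prob (p G') K"
    by (rule measure_pmf.finite_measure_mono) auto
  finally show ?thesis
    using assms(2) unfolding charging_def by simp
qed

text \<open>\<open>p (G \<union> G')\<close> gives positive mass to \<open>G\<close> or to \<open>G'\<close>, and charging passes upwards along it.\<close>

lemma charging_Un:
  assumes G: "G \<in> charging K" and G': "G' \<in> charging K"
  shows "G \<union> G' \<in> charging K"
proof -
  have U: "G \<union> G' \<in> \<G>"
    using G G' union_closed unfolding charging_def union_closed_def by blast
  have "1 \<le> measure_pmf.prob (p (G \<union> G')) G + measure_pmf.prob (p (G \<union> G')) G'"
    using prob_self[OF U] measure_Un_le[where M = "measure_pmf (p (G \<union> G'))" and A = G and B = G'] by simp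
  then have "0 < measure_pmf.prob (p (G \<union> G')) G \<or> 0 < measure_pmf.prob (p (G \<union> G')) G'"
    by linarith
  then show ?thesis
    using charging_upward[OF G U] charging_upward[OF G' U] by blast
qed

lemma max_charging_in:
  assumes "charging K \<noteq> {}"
  shows "max_charging K \<in> charging K"
proof -
  have "finite \<G>"
    using finite_space family_subset by (meson Pow_iff finite_Pow_iff rev_finite_subset subsetI)
  then show ?thesis
    unfolding max_charging_def
    using union_closed_Union[of "charging K" "charging K"] charging_Un assms
    by (auto simp: union_closed_def charging_def)
qed

lemma max_charging_meets:
  assumes "charging K \<noteq> {}"
  shows "set_pmf (p (max_charging K)) \<inter> K \<noteq> {}"
proof -
  have "0 < measure_pmf.prob (p (max_charging K)) K"
    using max_charging_in[OF assms] by (simp add: charging_def)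
  then show ?thesis
    by (simp add: measure_pmf_zero_iff[symmetric])
qed

lemma set_ext_pmf_charged:
  "charging K \<noteq> {} \<Longrightarrow> set_pmf (ext_pmf K) = set_pmf (p (max_charging K)) \<inter> K"
  unfolding ext_pmf_def using max_charging_meets by simp

lemma measure_ext_pmf_charged:
  assumes "charging K \<noteq> {}"
  shows "measure_pmf.prob (ext_pmf K) A =
    measure_pmf.prob (p (max_charging K)) (A \<inter> K) / measure_pmf.prob (p (max_charging K)) K"
  using assms by (simp add: ext_pmf_def measure_cond_pmf[OF max_charging_meets[OF assms]])

lemma set_ext_pmf_subset:
  assumes "K \<noteq> {}" "K \<subseteq> \<Omega>"
  shows "set_pmf (ext_pmf K) \<subseteq> K"
proof (cases "charging K = {}")
  case True
  then show ?thesis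
    using assms finite_subset[OF assms(2) finite_space] by (simp add: ext_pmf_def)
next
  case False
  then show ?thesis
    using set_ext_pmf_charged by simp
qed

lemma ext_pmf_chain:
  assumes EF: "E \<subseteq> F" and FK: "F \<subseteq> K" and F: "F \<noteq> {}" and K: "K \<subseteq> \<Omega>"
  shows "measure_pmf.prob (ext_pmf K) E =
         measure_pmf.prob (ext_pmf K) F * measure_pmf.prob (ext_pmf F) E"
proof (cases "charging K = {}")
  case True
  then have "charging F = {}"
    using charging_mono[OF FK] by blast
  moreover have "finite K" "finite F"
    using finite_space K FK by (auto intro: finite_subset)
  moreover have "K \<inter> E = E" "K \<inter> F = F" "F \<inter> E = E" "K \<noteq> {}" "card F > 0"
    using EF FK F \<open>finite F\<close> by (auto simp: card_gt_0_iff)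
  ultimately show ?thesis
    using True F FK by (auto simp: ext_pmf_def measure_pmf_of_set)
next
  case charged: False
  define G where "G = max_charging K"
  have measure_K: "measure_pmf.prob (ext_pmf K) A =
      measure_pmf.prob (p G) (A \<inter> K) / measure_pmf.prob (p G) K" for A
    using measure_ext_pmf_charged[OF charged] unfolding G_def .
  have "0 < measure_pmf.prob (p G) K"
    using max_charging_in[OF charged] unfolding G_def charging_def by simp
  have I: "E \<inter> K = E" "F \<inter> K = F" "E \<inter> F = E"
    using EF FK by auto
  show ?thesis
  proof (cases "0 < measure_pmf.prob (p G) F")
    case True
    then have "G \<in> charging F"
      using max_charging_in[OF charged] unfolding G_def charging_def by simp
    then have "max_charging F = G"
      using max_charging_in[of F] charging_mono[OF FK] unfolding max_charging_def G_def by blast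
    then have "measure_pmf.prob (ext_pmf F) E = measure_pmf.prob (p G) E / measure_pmf.prob (p G) F"
      using measure_ext_pmf_charged[of F E] \<open>G \<in> charging F\<close> I by auto
    then show ?thesis
      using measure_K I True \<open>0 < measure_pmf.prob (p G) K\<close> by simp
  next
    case False
    then have "measure_pmf.prob (p G) F = 0"
      by (simp add: zero_less_measure_iff)
    moreover have "measure_pmf.prob (p G) E \<le> measure_pmf.prob (p G) F"
      using EF by (intro measure_pmf.finite_measure_mono) auto
    ultimately show ?thesis
      using measure_K I by (simp add: measure_le_0_iff)
  qed
qed

lemma CPS_ext_pmf: "CPS \<Omega> (Pow \<Omega> - {{}}) ext_pmf"
proof (rule CPSI)
  fix G assume G: "G \<in> Pow \<Omega> - {{}}"
  then show "G \<noteq> {}" "G \<subseteq> \<Omega>"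
    by auto
  then have "set_pmf (ext_pmf G) \<subseteq> G"
    by (rule set_ext_pmf_subset)
  then show "set_pmf (ext_pmf G) \<subseteq> \<Omega>" "measure_pmf.prob (ext_pmf G) G = 1"
    using \<open>G \<subseteq> \<Omega>\<close> by (auto simp: measure_pmf_eq_1_iff)
next
  fix E F G
  assume "E \<subseteq> F" "F \<subseteq> G" "F \<in> Pow \<Omega> - {{}}" "G \<in> Pow \<Omega> - {{}}"
  then show "measure_pmf.prob (ext_pmf G) E =
             measure_pmf.prob (ext_pmf G) F * measure_pmf.prob (ext_pmf F) E"
    by (intro ext_pmf_chain) auto
qed

lemma ext_pmf_extends:
  assumes G: "G \<in> \<G>"
  shows "ext_pmf G = p G"
proof -
  have "G \<in> charging G"
    using G prob_self unfolding charging_def by simp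
  then have H: "max_charging G \<in> \<G>" "G \<subseteq> max_charging G"
      "0 < measure_pmf.prob (p (max_charging G)) G"
    using max_charging_in[of G] unfolding charging_def max_charging_def by auto
  have "cond_pmf (p (max_charging G)) G = p G"
    by (rule cond_pmf_eq_if_chain[OF H(3) set_pmf_subset[OF G]]) (rule prob_chain[OF _ H(2) G H(1)])
  then show ?thesis
    unfolding ext_pmf_def using \<open>G \<in> charging G\<close> by auto
qed

abbreviation one_events_p :: "'a set set" where
  "one_events_p \<equiv> one_events \<Omega> \<G> p"

lemma Union_one_events: "\<Union>one_events_p = \<Omega>"
  using CPS_subset_one_events[OF CPS] one_events_subset_Pow covers by blast

lemma one_aug_eq: "one_aug \<Omega> \<G> p = atom_closed \<Omega> one_events_p"
  by (rule one_aug_eq_atom_closed[OF finite_space Union_one_events])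

lemma atom_subset_support:
  assumes "G \<in> \<G>" "x \<in> G"
  shows "atom one_events_p x \<subseteq> insert x (set_pmf (p G))"
proof -
  have "insert x (set_pmf (p G)) \<in> one_events_p"
  proof (rule one_eventsI)
    show "insert x (set_pmf (p G)) \<subseteq> G"
      using assms set_pmf_subset by blast
    then show "insert x (set_pmf (p G)) \<subseteq> \<Omega>"
      using assms family_subset by blast
    show "measure_pmf.prob (p G) (insert x (set_pmf (p G))) = 1"
      by (simp add: measure_pmf_eq_1_iff subset_insertI)
  qed fact
  then show ?thesis
    unfolding atom_def by blast
qed

lemma one_aug_ext_pmf_closed:
  assumes K: "K \<in> one_aug \<Omega> \<G> p" and LK: "L \<subseteq> K"
    and L: "measure_pmf.prob (ext_pmf K) L = 1"
  shows "L \<in> one_aug \<Omega> \<G> p"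
proof -
  have K': "K \<noteq> {}" "K \<subseteq> \<Omega>" "\<forall>x\<in>K. atom one_events_p x \<subseteq> K"
    using K unfolding one_aug_eq atom_closed_def by auto
  have supp: "set_pmf (ext_pmf K) \<subseteq> L"
    using L by (simp add: measure_pmf_eq_1_iff)
  have "y \<in> L" if x: "x \<in> L" and y: "y \<in> atom one_events_p x" for x y
  proof (cases "y = x")
    case False
    obtain G where G: "G \<in> \<G>" "x \<in> G"
      using x LK K' covers by blast
    have yK: "y \<in> K"
      using x y LK K' by blast
    have "y \<in> set_pmf (p G)"
      using atom_subset_support[OF G] y False by blast
    then have "G \<in> charging K"
      using G measure_pmf_posI[OF _ yK] by (simp add: charging_def)
    then have charged: "charging K \<noteq> {}" and "x \<in> max_charging K"
      using G unfolding max_charging_def by auto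
    moreover have "max_charging K \<in> \<G>"
      using max_charging_in[OF charged] by (simp add: charging_def)
    ultimately have "y \<in> set_pmf (p (max_charging K))"
      using atom_subset_support y False by blast
    then show ?thesis
      using set_ext_pmf_charged[OF charged] yK supp by blast
  qed (use x in simp)
  moreover have "L \<noteq> {}"
    using supp set_pmf_not_empty[of "ext_pmf K"] by blast
  ultimately show ?thesis
    using LK K' unfolding one_aug_eq atom_closed_def by blast
qed

lemma one_aug_closed:
  "union_closed (one_aug \<Omega> \<G> p)" "ne_inter_closed (one_aug \<Omega> \<G> p)"
  "\<Union>(one_aug \<Omega> \<G> p) = \<Omega>"
  unfolding one_aug_eq
  by (simp_all add: union_closed_atom_closed ne_inter_closed_atom_closed
      Union_atom_closed[OF one_events_subset_Pow Union_one_events])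

lemma CPS_one_aug_ext_pmf: "CPS \<Omega> (one_aug \<Omega> \<G> p) ext_pmf"
  by (rule CPS_mono[OF CPS_ext_pmf]) (auto simp: one_aug_eq atom_closed_def)

lemma one_events_one_aug_ext_pmf: "one_events \<Omega> (one_aug \<Omega> \<G> p) ext_pmf = one_aug \<Omega> \<G> p"
proof
  show "one_events \<Omega> (one_aug \<Omega> \<G> p) ext_pmf \<subseteq> one_aug \<Omega> \<G> p"
    by (auto elim: one_eventsE intro: one_aug_ext_pmf_closed)
  show "one_aug \<Omega> \<G> p \<subseteq> one_events \<Omega> (one_aug \<Omega> \<G> p) ext_pmf"
    by (rule CPS_subset_one_events[OF CPS_one_aug_ext_pmf])
qed

lemma one_closed_iff: "one_closed \<Omega> \<G> p \<longleftrightarrow> one_aug \<Omega> \<G> p = \<G>"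
proof
  assume "one_closed \<Omega> \<G> p"
  then show "one_aug \<Omega> \<G> p = \<G>"
    unfolding one_closed_def
    by (rule one_aug_eq_if_one_events_eq[OF _ union_closed ne_inter_closed covers])
next
  assume "one_aug \<Omega> \<G> p = \<G>"
  then show "one_closed \<Omega> \<G> p"
    unfolding one_closed_def
    using one_events_subset_one_aug CPS_subset_one_events[OF CPS] by blast
qed

end

theorem theorem3:
  fixes \<Omega> :: "'a set" and \<G> :: "'a set set" and p :: "'a set \<Rightarrow> 'a pmf"
  assumes "finite \<Omega>"
    and "CPS \<Omega> \<G> p"
    and "union_closed \<G>" and "ne_inter_closed \<G>" and "\<Union>\<G> = \<Omega>"
  shows "(\<exists>p'. CPS \<Omega> (one_aug \<Omega> \<G> p) p' \<and>
               (\<forall>G\<in>\<G>. p' G = p G) \<and>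
               (\<forall>K\<in>one_aug \<Omega> \<G> p. \<forall>L. L \<subseteq> K \<longrightarrow> measure_pmf.prob (p' K) L = 1 \<longrightarrow>
                    L \<in> one_aug \<Omega> \<G> p) \<and>
               one_aug \<Omega> (one_aug \<Omega> \<G> p) p' = one_aug \<Omega> \<G> p)
       \<and> (one_closed \<Omega> \<G> p \<longleftrightarrow> one_aug \<Omega> \<G> p = \<G>)"
proof -
  interpret lattice_cps \<Omega> \<G> p
    using assms by unfold_locales
  have "one_aug \<Omega> (one_aug \<Omega> \<G> p) ext_pmf = one_aug \<Omega> \<G> p"
    by (rule one_aug_eq_if_one_events_eq[OF one_events_one_aug_ext_pmf one_aug_closed])
  then show ?thesis
    using one_closed_iff
  proof (intro conjI exI[of _ ext_pmf] ballI allI impI)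
    show "CPS \<Omega> (one_aug \<Omega> \<G> p) ext_pmf"
      by (rule CPS_one_aug_ext_pmf)
    show "ext_pmf G = p G" if "G \<in> \<G>" for G
      using that by (rule ext_pmf_extends)
    show "L \<in> one_aug \<Omega> \<G> p"
      if "K \<in> one_aug \<Omega> \<G> p" "L \<subseteq> K" "measure_pmf.prob (ext_pmf K) L = 1" for K L
      using that by (rule one_aug_ext_pmf_closed)
  qed
qed

end
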